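(* Let $\mathbf{r},\mathbf{s}$ be two duplicate-free TP relations. The number of lineage-aware temporal windows produced by the window advancer, i.e., $|\mathbf{W}(\mathbf{r},\mathbf{s})|$, is at most $n_r+n_s-f_d$, where $n_r$ and $n_s$ are the numbers of interval start and end points in $\mathbf{r}$ and $\mathbf{s}$ respectively, and $f_d$ is the number of distinct facts occurring in $\mathbf{r}$ and $\mathbf{s}$.
   Context: A TP relation $\mathbf{r}$ is a finite set of tuples $r$ with fact $r.F$ (a tuple of ordinary attribute values), lineage $r.\lambda$ (for a base tuple, its own identifier), time interval $r.T=[T_s,T_e)$ over a finite ordered domain of time points, and probability $r.p\in(0,1]$; each tuple contributes one start point $T_s$ and one end point $T_e$. $\mathbf{r}$ is duplicate-free iff any two distinct tuples with the same fact have disjoint intervals. $\lambda^{\mathbf{r},f}_t$ is $r.\lambda$ if some $r\in\mathbf{r}$ has $r.F=f$ and $t\in r.T$, and $\mathtt{null}$ otherwise. The set $\mathbf{W}(\mathbf{r},\mathbf{s})$ of lineage-aware windows (which the window-advancer algorithm enumerates) consists of tuples $\tilde w=(F,T,\lambda_r,\lambda_s)$, $T$ an interval, $\lambda_r,\lambda_s$ lineage expressions or $\mathtt{null}$, such that for all $t\in\tilde w.T$: ($\lambda^{\mathbf{r},\tilde w.F}_t\neq\mathtt{null}$ or $\lambda^{\mathbf{s},\tilde w.F}_t\neq\mathtt{null}$) and $\tilde w.\lambda_r=\lambda^{\mathbf{r},\tilde w.F}_t$ and $\tilde w.\lambda_s=\lambda^{\mathbf{s},\tilde w.F}_t$; and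 for all $t'\notin\tilde w.T$: $\tilde w.\lambda_r\neq\lambda^{\mathbf{r},\tilde w.F}_{t'}$ or $\tilde w.\lambda_s\neq\lambda^{\mathbf{s},\tilde w.F}_{t'}$. *)

theory Defs
  imports Complex_Main
begin

text \<open>A TP tuple: fact F, lineage (base-tuple identifier), interval [Ts, Te), probability p.\<close>
datatype ('f, 'l, 't) tp_tuple =
  TPT (fact: 'f) (lin: 'l) (ts: 't) (te: 't) (prob: real)

definition ivl :: "('f, 'l, 't::linorder) tp_tuple \<Rightarrow> 't set" where
  "ivl r = {ts r..<te r}"

text \<open>A TP relation: finite set of tuples with nonempty intervals, probability in (0,1],
  and lineage = the tuple's own identifier (hence distinct tuples have distinct lineage).\<close>
definition tp_relation :: "('f, 'l, 't::linorder) tp_tuple set \<Rightarrow> bool" where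
  "tp_relation R \<longleftrightarrow> finite R \<and>
     (\<forall>r\<in>R. ts r < te r \<and> 0 < prob r \<and> prob r \<le> 1) \<and> inj_on lin R"

definition duplicate_free :: "('f, 'l, 't::linorder) tp_tuple set \<Rightarrow> bool" where
  "duplicate_free R \<longleftrightarrow>
     (\<forall>r1\<in>R. \<forall>r2\<in>R. r1 \<noteq> r2 \<and> fact r1 = fact r2 \<longrightarrow> ivl r1 \<inter> ivl r2 = {})"

text \<open>lineage_at R f t is the lineage lambda^{R,f}_t; None encodes null.\<close>
definition lineage_at :: "('f, 'l, 't::linorder) tp_tuple set \<Rightarrow> 'f \<Rightarrow> 't \<Rightarrow> 'l option" where
  "lineage_at R f t =
     (if \<exists>r\<in>R. fact r = f \<and> t \<in> ivl r
      then Some (lin (SOME r. r \<in> R \<and> fact r = f \<and> t \<in> ivl r))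
      else None)"

definition windows ::
  "('f, 'l, 't::linorder) tp_tuple set \<Rightarrow> ('f, 'l, 't) tp_tuple set
     \<Rightarrow> ('f \<times> 't set \<times> 'l option \<times> 'l option) set" where
  "windows R S = {(F, T, lr, ls).
     (\<exists>a b. a < b \<and> T = {a..<b}) \<and>
     (\<forall>t\<in>T. (lineage_at R F t \<noteq> None \<or> lineage_at S F t \<noteq> None) \<and>
              lr = lineage_at R F t \<and> ls = lineage_at S F t) \<and>
     (\<forall>t'. t' \<notin> T \<longrightarrow> lr \<noteq> lineage_at R F t' \<or> ls \<noteq> lineage_at S F t')}"

text \<open>Number of interval start and end points (each tuple contributes one of each).\<close>
definition num_points :: "('f, 'l, 't) tp_tuple set \<Rightarrow> nat" where
  "num_points R = 2 * card R"

definition num_distinct_facts :: "('f, 'l, 't) tp_tuple set \<Rightarrow> ('f, 'l, 't) tp_tuple set \<Rightarrow> nat" where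
  "num_distinct_facts R S = card (fact ` R \<union> fact ` S)"

end

theory Submission
  imports Defs
begin

text \<open>
  For a fixed fact, the pair of lineages can only change at an interval endpoint of a tuple
  with that fact. A window is a maximal interval on which this pair is constant, so it starts
  at such an endpoint, and it is determined by its fact and its start point. The start point is
  covered by some tuple, hence it is not the last endpoint of its fact. Thus the windows inject
  into the pairs (fact, endpoint) with the last endpoint of every fact removed, a set of size at
  most \<open>2 |R| + 2 |S| - f\<^sub>d\<close>.
\<close>

definition endpoints :: "('f, 'l, 't) tp_tuple set \<Rightarrow> 'f \<Rightarrow> 't set" where
  "endpoints X F = ts ` {r \<in> X. fact r = F} \<union> te ` {r \<in> X. fact r = F}"

definition fact_endpoints :: "('f, 'l, 't) tp_tuple set \<Rightarrow> ('f \<times> 't) set" where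
  "fact_endpoints X = (\<lambda>r. (fact r, ts r)) ` X \<union> (\<lambda>r. (fact r, te r)) ` X"

definition last_endpoints :: "('f, 'l, 't::linorder) tp_tuple set \<Rightarrow> ('f \<times> 't) set" where
  "last_endpoints X = (\<lambda>F. (F, Max (endpoints X F))) ` fact ` X"

definition window_key :: "'f \<times> 't::linorder set \<times> 'l option \<times> 'l option \<Rightarrow> 'f \<times> 't" where
  "window_key = (\<lambda>(F, T, _, _). (F, LEAST t. t \<in> T))"

lemma finite_endpoints: "finite X \<Longrightarrow> finite (endpoints X F)"
  unfolding endpoints_def by simp

lemma endpoints_mono: "X \<subseteq> Y \<Longrightarrow> endpoints X F \<subseteq> endpoints Y F"
  unfolding endpoints_def by auto

lemma mem_fact_endpoints_iff: "(F, e) \<in> fact_endpoints X \<longleftrightarrow> e \<in> endpoints X F"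
  unfolding fact_endpoints_def endpoints_def by auto

lemma finite_fact_endpoints: "finite X \<Longrightarrow> finite (fact_endpoints X)"
  unfolding fact_endpoints_def by simp

lemma card_fact_endpoints_le:
  assumes "finite X"
  shows "card (fact_endpoints X) \<le> 2 * card X"
proof -
  have "card (fact_endpoints X)
      \<le> card ((\<lambda>r. (fact r, ts r)) ` X) + card ((\<lambda>r. (fact r, te r)) ` X)"
    unfolding fact_endpoints_def by (rule card_Un_le)
  also have "\<dots> \<le> card X + card X"
    using card_image_le[OF assms] by (intro add_mono)
  finally show ?thesis by simp
qed

lemma last_endpoints_subset:
  assumes "finite X"
  shows "last_endpoints X \<subseteq> fact_endpoints X"
proof
  fix x assume "x \<in> last_endpoints X"
  then obtain r where r: "r \<in> X" and x: "x = (fact r, Max (endpoints X (fact r)))"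
    unfolding last_endpoints_def by auto
  have "ts r \<in> endpoints X (fact r)"
    using r unfolding endpoints_def by auto
  then have "Max (endpoints X (fact r)) \<in> endpoints X (fact r)"
    using finite_endpoints[OF assms] by (intro Max_in) auto
  then show "x \<in> fact_endpoints X"
    unfolding x mem_fact_endpoints_iff .
qed

lemma card_last_endpoints: "card (last_endpoints X) = card (fact ` X)"
  unfolding last_endpoints_def by (rule card_image) (auto intro: inj_onI)

lemma lineage_at_neq_None_iff:
  "lineage_at X F t \<noteq> None \<longleftrightarrow> (\<exists>r\<in>X. fact r = F \<and> t \<in> ivl r)"
  unfolding lineage_at_def by simp

lemma lineage_at_eq_if_no_endpoint_between:
  assumes "p \<le> t" and "\<forall>e\<in>endpoints X F. \<not> (p < e \<and> e \<le> t)"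
  shows "lineage_at X F p = lineage_at X F t"
proof -
  have "p \<in> ivl r \<longleftrightarrow> t \<in> ivl r" if "r \<in> X" "fact r = F" for r
  proof -
    have "ts r \<in> endpoints X F" "te r \<in> endpoints X F"
      using that unfolding endpoints_def by auto
    then show ?thesis
      using assms unfolding ivl_def by (auto simp: not_less intro: order.trans)
  qed
  then have "(\<lambda>r. r \<in> X \<and> fact r = F \<and> p \<in> ivl r) = (\<lambda>r. r \<in> X \<and> fact r = F \<and> t \<in> ivl r)"
    by blast
  then show ?thesis
    unfolding lineage_at_def by (simp add: Bex_def) blast
qed

lemma windows_memE:
  assumes "w \<in> windows R S"
  obtains F a b lr ls where "w = (F, {a..<b}, lr, ls)"
  using assms unfolding windows_def by auto

lemma windows_memD:
  assumes "(F, {a..<b}, lr, ls) \<in> windows R S"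
  shows "a < b"
    and "t \<in> {a..<b} \<Longrightarrow> lineage_at R F t \<noteq> None \<or> lineage_at S F t \<noteq> None"
    and "t \<in> {a..<b} \<Longrightarrow> lr = lineage_at R F t \<and> ls = lineage_at S F t"
    and "t \<notin> {a..<b} \<Longrightarrow> lr \<noteq> lineage_at R F t \<or> ls \<noteq> lineage_at S F t"
proof -
  from assms obtain a' b' where "a' < b'" "{a..<b} = {a'..<b'}"
    unfolding windows_def by auto
  then show "a < b"
    by (metis atLeastLessThan_empty_iff)
qed (use assms in \<open>auto simp: windows_def\<close>)

lemma window_interval_eq:
  assumes "(F, T, lr, ls) \<in> windows R S"
  shows "T = {t. lineage_at R F t = lr \<and> lineage_at S F t = ls}"
  using assms unfolding windows_def by auto

lemma window_start_covered:
  assumes "(F, {a..<b}, lr, ls) \<in> windows R S"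
  shows "\<exists>r\<in>R \<union> S. fact r = F \<and> a \<in> ivl r"
proof -
  have "a \<in> {a..<b}"
    using windows_memD(1)[OF assms] by simp
  then have "lineage_at R F a \<noteq> None \<or> lineage_at S F a \<noteq> None"
    by (rule windows_memD(2)[OF assms])
  then show ?thesis
    unfolding lineage_at_neq_None_iff by blast
qed

lemma window_start_mem_endpoints:
  assumes "finite R" "finite S" and w: "(F, {a..<b}, lr, ls) \<in> windows R S"
  shows "a \<in> endpoints (R \<union> S) F"
proof (rule ccontr)
  assume a_not_endpoint: "a \<notin> endpoints (R \<union> S) F"
  define below where "below = {e \<in> endpoints (R \<union> S) F. e \<le> a}"
  define p where "p = Max below"
  obtain r where "r \<in> R \<union> S" "fact r = F" "a \<in> ivl r"
    using window_start_covered[OF w] by blast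
  then have "ts r \<in> below"
    unfolding below_def endpoints_def ivl_def by auto
  moreover have "finite below"
    unfolding below_def using finite_endpoints[of "R \<union> S" F] assms(1,2) by simp
  ultimately have "p \<in> below" and max_below: "\<And>e. e \<in> below \<Longrightarrow> e \<le> p"
    unfolding p_def by (auto intro: Max_in)
  then have "p < a"
    using a_not_endpoint unfolding below_def by (auto simp: order.order_iff_strict)
  have no_endpoint: "\<forall>e\<in>endpoints X F. \<not> (p < e \<and> e \<le> a)" if "X \<subseteq> R \<union> S" for X
    using endpoints_mono[OF that] max_below unfolding below_def by fastforce
  have "lineage_at R F p = lineage_at R F a" "lineage_at S F p = lineage_at S F a"
    using \<open>p < a\<close> no_endpoint by (auto intro!: lineage_at_eq_if_no_endpoint_between)
  moreover have "a \<in> {a..<b}" "p \<notin> {a..<b}"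
    using \<open>p < a\<close> windows_memD(1)[OF w] by auto
  ultimately show False
    using windows_memD(3)[OF w \<open>a \<in> {a..<b}\<close>] windows_memD(4)[OF w \<open>p \<notin> {a..<b}\<close>] by simp
qed

lemma window_key_eq: "a < b \<Longrightarrow> window_key (F, {a..<b}, lr, ls) = (F, a)"
  unfolding window_key_def by (auto intro: Least_equality)

lemma window_key_mem:
  assumes "finite R" "finite S" and w: "w \<in> windows R S"
  shows "window_key w \<in> fact_endpoints (R \<union> S) - last_endpoints (R \<union> S)"
proof -
  obtain F a b lr ls where w_eq: "w = (F, {a..<b}, lr, ls)"
    using w by (rule windows_memE)
  note w = w[unfolded w_eq]
  have "a \<in> endpoints (R \<union> S) F"
    using window_start_mem_endpoints[OF assms(1,2) w] .
  moreover have "(F, a) \<notin> last_endpoints (R \<union> S)"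
  proof
    assume "(F, a) \<in> last_endpoints (R \<union> S)"
    then have a_max: "a = Max (endpoints (R \<union> S) F)"
      unfolding last_endpoints_def by auto
    obtain r where "r \<in> R \<union> S" "fact r = F" "a \<in> ivl r"
      using window_start_covered[OF w] by blast
    then have "te r \<in> endpoints (R \<union> S) F" "a < te r"
      unfolding endpoints_def ivl_def by auto
    then show False
      using a_max finite_endpoints[of "R \<union> S" F] assms(1,2) by (simp add: leD)
  qed
  ultimately show ?thesis
    unfolding w_eq window_key_eq[OF windows_memD(1)[OF w]] by (simp add: mem_fact_endpoints_iff)
qed

lemma inj_on_window_key: "inj_on window_key (windows R S)"
proof (rule inj_onI)
  fix w1 w2
  assume w1: "w1 \<in> windows R S" and w2: "w2 \<in> windows R S"
    and same_key: "window_key w1 = window_key w2"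
  obtain F a b1 lr1 ls1 where w1_eq: "w1 = (F, {a..<b1}, lr1, ls1)"
    using w1 by (rule windows_memE)
  obtain F' a' b2 lr2 ls2 where w2_eq: "w2 = (F', {a'..<b2}, lr2, ls2)"
    using w2 by (rule windows_memE)
  note w1 = w1[unfolded w1_eq] and w2 = w2[unfolded w2_eq]
  have "F' = F" "a' = a"
    using same_key unfolding w1_eq w2_eq
    by (simp_all add: window_key_eq windows_memD(1)[OF w1] windows_memD(1)[OF w2])
  note w2 = w2[unfolded \<open>F' = F\<close> \<open>a' = a\<close>]
  have "a \<in> {a..<b1}" "a \<in> {a..<b2}"
    using windows_memD(1)[OF w1] windows_memD(1)[OF w2] by auto
  then have "lr1 = lr2" "ls1 = ls2"
    using windows_memD(3)[OF w1] windows_memD(3)[OF w2] by auto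
  then have "{a..<b1} = {a..<b2}"
    using window_interval_eq[OF w1] window_interval_eq[OF w2] by simp
  then show "w1 = w2"
    unfolding w1_eq w2_eq \<open>F' = F\<close> \<open>a' = a\<close> \<open>lr1 = lr2\<close> \<open>ls1 = ls2\<close> by simp
qed

lemma card_windows_le:
  assumes "finite R" "finite S"
  shows "finite (windows R S) \<and>
    card (windows R S) \<le> card (fact_endpoints (R \<union> S)) - card (fact ` (R \<union> S))"
proof -
  let ?Q = "fact_endpoints (R \<union> S)" and ?M = "last_endpoints (R \<union> S)"
  have finite_Q: "finite ?Q"
    using finite_fact_endpoints[of "R \<union> S"] assms by simp
  have M_sub: "?M \<subseteq> ?Q"
    using last_endpoints_subset[of "R \<union> S"] assms by simp
  have image_sub: "window_key ` windows R S \<subseteq> ?Q - ?M"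
    using window_key_mem assms by blast
  then have "finite (windows R S)"
    using finite_Q inj_on_window_key by (metis finite_Diff finite_imageD finite_subset)
  moreover have "card (windows R S) \<le> card (?Q - ?M)"
    using card_inj_on_le[OF inj_on_window_key image_sub] finite_Q by simp
  moreover have "card (?Q - ?M) = card ?Q - card (fact ` (R \<union> S))"
    using card_Diff_subset[OF finite_subset[OF M_sub finite_Q] M_sub]
    by (simp add: card_last_endpoints)
  ultimately show ?thesis by simp
qed

theorem proposition1:
  fixes R S :: "('f, 'l, 't::linorder) tp_tuple set"
  assumes "tp_relation R" and "tp_relation S"
    and "duplicate_free R" and "duplicate_free S"
  shows "finite (windows R S) \<and>
    int (card (windows R S)) \<le>
      int (num_points R) + int (num_points S) - int (num_distinct_facts R S)"
proof -
  have finite: "finite R" "finite S"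
    using assms(1,2) unfolding tp_relation_def by auto
  then have "finite (R \<union> S)"
    by simp
  then have "card (fact ` (R \<union> S)) \<le> card (fact_endpoints (R \<union> S))"
    using card_mono[OF finite_fact_endpoints last_endpoints_subset] card_last_endpoints
    by metis
  moreover have "card (fact_endpoints (R \<union> S)) \<le> 2 * card R + 2 * card S"
    using card_fact_endpoints_le[of "R \<union> S"] card_Un_le[of R S] finite by simp
  ultimately show ?thesis
    using card_windows_le[OF finite]
    unfolding num_points_def num_distinct_facts_def image_Un by linarith
qed

end
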